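(* Let $\mathbb A_1,\dots,\mathbb A_n\in\mathfrak A$, let $R\le\mathbb A_1\times\cdots\times\mathbb A_n$, let $I\subseteq[n]$, and let $\mathbf a_1,\dots,\mathbf a_k$ be a path in $\mathcal G(\mathrm{pr}_I R)$. Then there are $\mathbf b_1,\dots,\mathbf b_k\in\mathrm{pr}_{[n]\setminus I}R$ such that $(\mathbf a_1,\mathbf b_1),\dots,(\mathbf a_k,\mathbf b_k)$ all belong to $R$ and form a path in $\mathcal G(R)$.
   Context: An algebra is conservative if every subset of its universe is closed under all its basic operations. $\mathfrak A$ is a finite class of finite conservative algebras of the same signature, closed under subalgebras, such that for every $\mathbb A\in\mathfrak A$ (universe $A$) and every 2-element $\{a,b\}\subseteq A$ some term operation of $\mathfrak A$ restricted to $\{a,b\}\cong\{0,1\}$ is a semilattice operation ($\wedge$ or $\vee$), the majority operation, or the affine operation $x-y+z\pmod 2$. For distinct $a,b\in A$, $\{a,b\}$ is a semilattice edge if some term operation restricts to a semilattice operation on it; otherwise a majority edge if some term operation restricts to majority on it; otherwise an affine edge. Fix term operations $x\cdot y$, $p(x,y)$, $g(x,y,z)$, $h(x,y,z)$ of $\mathfrak A$ such that for every $\mathbb A\in\mathfrak A$ and every 2-element $B\subseteq A$: $\cdot$ is a semilattice operation on $B$ if $B$ is a semilattice edge and $x\cdot y=x$ on $B$ otherwise; $g$ is majority on majority edges, $g(x,y,z)=x$ on affine edges, $g(x,y,z)=(x\cdot y)\cdot z$ on semilattice edges; $h$ is affine on affine edges, $h(x,y,z)=x$ on majority edges, $h(x,y,z)=(x\cdot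 y)\cdot z$ on semilattice edges; $p(x,y)=x\cdot y$ on semilattice edges, $p(x,y)=y$ on majority edges, $p(x,y)=x$ on affine edges. A semilattice edge $\{a,b\}$ is directed from $a$ to $b$ if $a\cdot b=b\cdot a=b$. $R\le\mathbb A_1\times\cdots\times\mathbb A_n$ means $R\subseteq A_1\times\cdots\times A_n$ is closed under coordinatewise application of the term operations. $\mathbf a[i]$ is the $i$th coordinate, $[n]=\{1,\dots,n\}$, $\mathrm{pr}_I$ is projection onto the coordinates in $I$; for $\mathbf a\in\mathrm{pr}_IR$, $\mathbf b\in\mathrm{pr}_{[n]\setminus I}R$, $(\mathbf a,\mathbf b)$ is the $n$-tuple agreeing with $\mathbf a$ on $I$ and with $\mathbf b$ elsewhere. Graph $\mathcal G(R)$ (also for projections of $R$): vertices are elements of $R$; $\mathbf a,\mathbf b\in R$ form a semilattice edge directed from $\mathbf a$ to $\mathbf b$ if for each $i$ either $\mathbf a[i]=\mathbf b[i]$ or $\{\mathbf a[i],\mathbf b[i]\}$ is a semilattice edge directed from $\mathbf a[i]$ to $\mathbf b[i]$; they form an affine (majority) edge if for each $i$ either $\mathbf a[i]=\mathbf b[i]$ or $\{\mathbf a[i],\mathbf b[i]\}$ is an affine (majority) edge. A path is a sequence $\mathbf a_1,\dots,\mathbf a_k$ of vertices such that each consecutive pair $\mathbf a_i,\mathbf a_{i+1}$ is either a semilattice edge directed from $\mathbf a_i$ to $\mathbf a_{i+1}$ or an affine edge. *)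

theory Defs
  imports "HOL-Library.FuncSet"
begin

text \<open>An algebra is a pair (universe, interpretation of the operation symbols); all
  algebras share the element type 'a (each has its own universe).\<close>

type_synonym ('a,'f) alg = "'a set \<times> ('f \<Rightarrow> 'a list \<Rightarrow> 'a)"

definition univ :: "('a,'f) alg \<Rightarrow> 'a set" where "univ A = fst A"
definition ops :: "('a,'f) alg \<Rightarrow> 'f \<Rightarrow> 'a list \<Rightarrow> 'a" where "ops A = snd A"

datatype 'f trm = Var nat | Fn 'f "'f trm list"

fun teval :: "('a,'f) alg \<Rightarrow> 'f trm \<Rightarrow> (nat \<Rightarrow> 'a) \<Rightarrow> 'a" where
  "teval A (Var j) env = env j"
| "teval A (Fn f ts) env = ops A f (map (\<lambda>t. teval A t env) ts)"

fun wf_trm :: "('f \<Rightarrow> nat) \<Rightarrow> nat \<Rightarrow> 'f trm \<Rightarrow> bool" where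
  "wf_trm ar m (Var j) = (j < m)"
| "wf_trm ar m (Fn f ts) = (length ts = ar f \<and> (\<forall>t\<in>set ts. wf_trm ar m t))"

definition ev2 :: "('a,'f) alg \<Rightarrow> 'f trm \<Rightarrow> 'a \<Rightarrow> 'a \<Rightarrow> 'a" where
  "ev2 A t x y = teval A t (\<lambda>j. if j = 0 then x else y)"

definition ev3 :: "('a,'f) alg \<Rightarrow> 'f trm \<Rightarrow> 'a \<Rightarrow> 'a \<Rightarrow> 'a \<Rightarrow> 'a" where
  "ev3 A t x y z = teval A t (\<lambda>j. if j = 0 then x else if j = 1 then y else z)"

definition conservative :: "('f \<Rightarrow> nat) \<Rightarrow> ('a,'f) alg \<Rightarrow> bool" where
  "conservative ar A \<longleftrightarrow> (\<forall>B \<subseteq> univ A. \<forall>f xs. length xs = ar f \<longrightarrow> set xs \<subseteq> B \<longrightarrow> ops A f xs \<in> B)"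

text \<open>Semilattice on {a,b} (covers both \<wedge> and \<or> under {a,b} \<cong> {0,1}).\<close>
definition semilat_on :: "('a,'f) alg \<Rightarrow> 'f trm \<Rightarrow> 'a \<Rightarrow> 'a \<Rightarrow> bool" where
  "semilat_on A t a b \<longleftrightarrow> ev2 A t a a = a \<and> ev2 A t b b = b \<and> ev2 A t a b = ev2 A t b a
     \<and> ev2 A t a b \<in> {a, b}"

definition majority_on :: "('a,'f) alg \<Rightarrow> 'f trm \<Rightarrow> 'a \<Rightarrow> 'a \<Rightarrow> bool" where
  "majority_on A t a b \<longleftrightarrow> (\<forall>x\<in>{a,b}. \<forall>y\<in>{a,b}.
      ev3 A t x x y = x \<and> ev3 A t x y x = x \<and> ev3 A t y x x = x)"

text \<open>The affine operation x - y + z (mod 2) on {a,b}.\<close>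
definition affine_on :: "('a,'f) alg \<Rightarrow> 'f trm \<Rightarrow> 'a \<Rightarrow> 'a \<Rightarrow> bool" where
  "affine_on A t a b \<longleftrightarrow> (\<forall>x\<in>{a,b}. \<forall>y\<in>{a,b}.
      ev3 A t x x y = y \<and> ev3 A t y x x = y \<and> ev3 A t x y x = y)"

definition semilattice_edge :: "('f \<Rightarrow> nat) \<Rightarrow> ('a,'f) alg \<Rightarrow> 'a \<Rightarrow> 'a \<Rightarrow> bool" where
  "semilattice_edge ar A a b \<longleftrightarrow> a \<in> univ A \<and> b \<in> univ A \<and> a \<noteq> b \<and>
     (\<exists>t. wf_trm ar 2 t \<and> semilat_on A t a b)"

definition majority_edge :: "('f \<Rightarrow> nat) \<Rightarrow> ('a,'f) alg \<Rightarrow> 'a \<Rightarrow> 'a \<Rightarrow> bool" where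
  "majority_edge ar A a b \<longleftrightarrow> a \<in> univ A \<and> b \<in> univ A \<and> a \<noteq> b \<and>
     \<not> semilattice_edge ar A a b \<and> (\<exists>t. wf_trm ar 3 t \<and> majority_on A t a b)"

definition affine_edge :: "('f \<Rightarrow> nat) \<Rightarrow> ('a,'f) alg \<Rightarrow> 'a \<Rightarrow> 'a \<Rightarrow> bool" where
  "affine_edge ar A a b \<longleftrightarrow> a \<in> univ A \<and> b \<in> univ A \<and> a \<noteq> b \<and>
     \<not> semilattice_edge ar A a b \<and> \<not> majority_edge ar A a b"

definition sl_dir :: "('f \<Rightarrow> nat) \<Rightarrow> 'f trm \<Rightarrow> ('a,'f) alg \<Rightarrow> 'a \<Rightarrow> 'a \<Rightarrow> bool" where
  "sl_dir ar mul A a b \<longleftrightarrow> semilattice_edge ar A a b \<and> ev2 A mul a b = b \<and> ev2 A mul b a = b"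

definition good_class ::
  "('f \<Rightarrow> nat) \<Rightarrow> ('a,'f) alg set \<Rightarrow> 'f trm \<Rightarrow> 'f trm \<Rightarrow> 'f trm \<Rightarrow> 'f trm \<Rightarrow> bool" where
  "good_class ar K mul p g h \<longleftrightarrow>
     finite K \<and>
     (\<forall>A\<in>K. finite (univ A) \<and> conservative ar A) \<and>
     (\<forall>A\<in>K. \<forall>B. B \<subseteq> univ A \<longrightarrow> B \<noteq> {} \<longrightarrow>
        (\<exists>A'\<in>K. univ A' = B \<and>
           (\<forall>f xs. length xs = ar f \<longrightarrow> set xs \<subseteq> B \<longrightarrow> ops A' f xs = ops A f xs))) \<and>
     (\<forall>A\<in>K. \<forall>a\<in>univ A. \<forall>b\<in>univ A. a \<noteq> b \<longrightarrow>
        (\<exists>t. wf_trm ar 2 t \<and> semilat_on A t a b) \<or>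
        (\<exists>t. wf_trm ar 3 t \<and> majority_on A t a b) \<or>
        (\<exists>t. wf_trm ar 3 t \<and> affine_on A t a b)) \<and>
     wf_trm ar 2 mul \<and> wf_trm ar 2 p \<and> wf_trm ar 3 g \<and> wf_trm ar 3 h \<and>
     (\<forall>A\<in>K. \<forall>a\<in>univ A. \<forall>b\<in>univ A. a \<noteq> b \<longrightarrow>
        (semilattice_edge ar A a b \<longrightarrow>
           semilat_on A mul a b \<and>
           (\<forall>x\<in>{a,b}. \<forall>y\<in>{a,b}. \<forall>z\<in>{a,b}.
              ev3 A g x y z = ev2 A mul (ev2 A mul x y) z \<and>
              ev3 A h x y z = ev2 A mul (ev2 A mul x y) z) \<and>
           (\<forall>x\<in>{a,b}. \<forall>y\<in>{a,b}. ev2 A p x y = ev2 A mul x y)) \<and>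
        (\<not> semilattice_edge ar A a b \<longrightarrow> (\<forall>x\<in>{a,b}. \<forall>y\<in>{a,b}. ev2 A mul x y = x)) \<and>
        (majority_edge ar A a b \<longrightarrow>
           majority_on A g a b \<and>
           (\<forall>x\<in>{a,b}. \<forall>y\<in>{a,b}. \<forall>z\<in>{a,b}. ev3 A h x y z = x) \<and>
           (\<forall>x\<in>{a,b}. \<forall>y\<in>{a,b}. ev2 A p x y = y)) \<and>
        (affine_edge ar A a b \<longrightarrow>
           affine_on A h a b \<and>
           (\<forall>x\<in>{a,b}. \<forall>y\<in>{a,b}. \<forall>z\<in>{a,b}. ev3 A g x y z = x) \<and>
           (\<forall>x\<in>{a,b}. \<forall>y\<in>{a,b}. ev2 A p x y = x)))"

text \<open>n-tuples are functions on {1..n} (extensional: undefined elsewhere).\<close>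

definition subpower :: "('f \<Rightarrow> nat) \<Rightarrow> nat \<Rightarrow> (nat \<Rightarrow> ('a,'f) alg) \<Rightarrow> (nat \<Rightarrow> 'a) set \<Rightarrow> bool" where
  "subpower ar n A R \<longleftrightarrow> R \<subseteq> (\<Pi>\<^sub>E i\<in>{1..n}. univ (A i)) \<and>
     (\<forall>m t rs. wf_trm ar m t \<longrightarrow> (\<forall>j<m. rs j \<in> R) \<longrightarrow>
        (\<lambda>i\<in>{1..n}. teval (A i) t (\<lambda>j. rs j i)) \<in> R)"

definition proj :: "nat set \<Rightarrow> (nat \<Rightarrow> 'a) set \<Rightarrow> (nat \<Rightarrow> 'a) set" where
  "proj I R = (\<lambda>r. restrict r I) ` R"

text \<open>(a, b): agrees with a on I and with b elsewhere.\<close>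
definition merge :: "nat set \<Rightarrow> (nat \<Rightarrow> 'a) \<Rightarrow> (nat \<Rightarrow> 'a) \<Rightarrow> nat \<Rightarrow> 'a" where
  "merge I a b = (\<lambda>i. if i \<in> I then a i else b i)"

definition tup_sl_edge :: "('f \<Rightarrow> nat) \<Rightarrow> 'f trm \<Rightarrow> (nat \<Rightarrow> ('a,'f) alg) \<Rightarrow> nat set
    \<Rightarrow> (nat \<Rightarrow> 'a) \<Rightarrow> (nat \<Rightarrow> 'a) \<Rightarrow> bool" where
  "tup_sl_edge ar mul A J x y \<longleftrightarrow> (\<forall>i\<in>J. x i = y i \<or> sl_dir ar mul (A i) (x i) (y i))"

definition tup_aff_edge :: "('f \<Rightarrow> nat) \<Rightarrow> (nat \<Rightarrow> ('a,'f) alg) \<Rightarrow> nat set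
    \<Rightarrow> (nat \<Rightarrow> 'a) \<Rightarrow> (nat \<Rightarrow> 'a) \<Rightarrow> bool" where
  "tup_aff_edge ar A J x y \<longleftrightarrow> (\<forall>i\<in>J. x i = y i \<or> affine_edge ar (A i) (x i) (y i))"

definition is_path :: "('f \<Rightarrow> nat) \<Rightarrow> 'f trm \<Rightarrow> (nat \<Rightarrow> ('a,'f) alg) \<Rightarrow> nat set
    \<Rightarrow> (nat \<Rightarrow> 'a) set \<Rightarrow> (nat \<Rightarrow> 'a) list \<Rightarrow> bool" where
  "is_path ar mul A J S xs \<longleftrightarrow> set xs \<subseteq> S \<and>
     (\<forall>j. Suc j < length xs \<longrightarrow>
        tup_sl_edge ar mul A J (xs ! j) (xs ! Suc j) \<or> tup_aff_edge ar A J (xs ! j) (xs ! Suc j))"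

end

theory Submission imports Defs begin

(* The lift is extended by one coordinate m at a time, moving along the path. Across a
   semilattice edge from x to x' the next tuple is c * b, for the current endpoint c and any
   tuple b over x'; across an affine edge it is h(c, c, b), which moves correctly in coordinate m
   provided c_m * b_m = c_m. This absorption is kept as an invariant: if the endpoint of a lift
   violates it, the prefix is lifted again over c * b, which projects to the same point as c but
   agrees with b in coordinate m. *)

lemma teval_closed:
  assumes "conservative ar A" "B \<subseteq> univ A" "wf_trm ar k t" "\<forall>j<k. env j \<in> B"
  shows "teval A t env \<in> B"
  using assms(3)
proof (induction t)
  case (Fn f ts)
  then have "set (map (\<lambda>t. teval A t env) ts) \<subseteq> B" "length ts = ar f" by auto
  with assms(1,2) show ?case unfolding conservative_def by simp
qed (use assms(4) in simp)

lemma ev2_in_pair: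
  assumes "conservative ar A" "wf_trm ar 2 t" "x \<in> univ A" "y \<in> univ A"
  shows "ev2 A t x y \<in> {x, y}"
  unfolding ev2_def by (rule teval_closed[OF assms(1) _ assms(2)]) (use assms in auto)

lemma ev2_idem:
  assumes "conservative ar A" "wf_trm ar 2 t" "x \<in> univ A"
  shows "ev2 A t x x = x"
  using ev2_in_pair[OF assms(1-3,3)] by simp

lemma ev3_idem:
  assumes "conservative ar A" "wf_trm ar 3 t" "x \<in> univ A"
  shows "ev3 A t x x x = x"
proof -
  have "ev3 A t x x x \<in> {x}"
    unfolding ev3_def by (rule teval_closed[OF assms(1) _ assms(2)]) (use assms in auto)
  then show ?thesis by simp
qed

lemma teval_cong:
  "wf_trm ar m t \<Longrightarrow> (\<forall>j<m. env j = env' j) \<Longrightarrow> teval A t env = teval A t env'"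
  by (induction t) (auto intro!: arg_cong[where f = "ops A _"] map_cong)

lemma list_all2_last:
  assumes "list_all2 P xs ys" "xs \<noteq> []"
  shows "P (last xs) (last ys)"
proof -
  have "length xs = length ys" "\<forall>i<length xs. P (xs ! i) (ys ! i)"
    using assms(1) by (simp_all add: list_all2_conv_all_nth)
  moreover have "ys \<noteq> []" using assms(2) calculation(1) by auto
  ultimately show ?thesis using assms(2) by (simp add: last_conv_nth)
qed

lemma consecutive_snoc:
  "(\<forall>j. Suc j < length (xs @ [x]) \<longrightarrow> P ((xs @ [x]) ! j) ((xs @ [x]) ! Suc j)) \<longleftrightarrow>
     (\<forall>j. Suc j < length xs \<longrightarrow> P (xs ! j) (xs ! Suc j)) \<and> (xs \<noteq> [] \<longrightarrow> P (last xs) x)"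
proof (intro iffI conjI allI impI)
  fix j
  assume H: "\<forall>j. Suc j < length (xs @ [x]) \<longrightarrow> P ((xs @ [x]) ! j) ((xs @ [x]) ! Suc j)"
    and "Suc j < length xs"
  with H[rule_format, of j] show "P (xs ! j) (xs ! Suc j)" by (simp add: nth_append)
next
  assume H: "\<forall>j. Suc j < length (xs @ [x]) \<longrightarrow> P ((xs @ [x]) ! j) ((xs @ [x]) ! Suc j)"
    and "xs \<noteq> []"
  with H[rule_format, of "length xs - 1"] show "P (last xs) x"
    by (simp add: nth_append last_conv_nth)
next
  fix j
  assume H: "(\<forall>j. Suc j < length xs \<longrightarrow> P (xs ! j) (xs ! Suc j)) \<and> (xs \<noteq> [] \<longrightarrow> P (last xs) x)"
    and "Suc j < length (xs @ [x])"
  then consider "Suc j < length xs" | "j = length xs - 1" "xs \<noteq> []" by fastforce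
  then show "P ((xs @ [x]) ! j) ((xs @ [x]) ! Suc j)"
    by cases (use H in \<open>auto simp: nth_append last_conv_nth\<close>)
qed

lemma subpower_PiE: "subpower ar n A R \<Longrightarrow> R \<subseteq> (\<Pi>\<^sub>E i\<in>{1..n}. univ (A i))"
  unfolding subpower_def by (rule conjunct1)

lemma proj_mem:
  assumes "subpower ar n A R" "S \<subseteq> {1..n}" "y \<in> proj S R" "i \<in> S"
  shows "y i \<in> univ (A i)"
proof -
  obtain r where "r \<in> R" "y = restrict r S" using assms(3) unfolding proj_def by blast
  then show ?thesis using subpower_PiE[OF assms(1)] assms(2,4) by auto
qed

lemma proj_restrict: "y \<in> proj S R \<Longrightarrow> restrict y S = y"
  unfolding proj_def by auto

lemma proj_fibre:
  assumes "J \<subseteq> S" "x \<in> proj J R"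
  shows "\<exists>c\<in>proj S R. restrict c J = x"
proof -
  obtain r where "r \<in> R" "x = restrict r J" using assms(2) unfolding proj_def by blast
  then have "restrict r S \<in> proj S R" "restrict (restrict r S) J = x"
    using assms(1) unfolding proj_def by (auto simp: Int_absorb1)
  then show ?thesis by blast
qed

lemma proj_full:
  assumes "subpower ar n A R"
  shows "proj {1..n} R = R"
proof -
  have "(\<lambda>r. restrict r {1..n}) ` R = (\<lambda>r. r) ` R"
    using subpower_PiE[OF assms] by (intro image_cong) auto
  then show ?thesis unfolding proj_def by simp
qed

lemma proj_closed:
  assumes sp: "subpower ar n A R" and S: "S \<subseteq> {1..n}" and t: "wf_trm ar m t"
    and rs: "\<forall>j<m. rs j \<in> proj S R"
  shows "(\<lambda>i\<in>S. teval (A i) t (\<lambda>j. rs j i)) \<in> proj S R"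
proof -
  have "\<forall>j. \<exists>r. j < m \<longrightarrow> r \<in> R \<and> rs j = restrict r S"
    using rs unfolding proj_def by blast
  then obtain r where r: "\<forall>j<m. r j \<in> R \<and> rs j = restrict (r j) S"
    by metis
  then have mem: "(\<lambda>i\<in>{1..n}. teval (A i) t (\<lambda>j. r j i)) \<in> R"
    using sp[unfolded subpower_def, THEN conjunct2, rule_format, OF t] by blast
  have eq: "restrict (\<lambda>i\<in>{1..n}. teval (A i) t (\<lambda>j. r j i)) S
      = (\<lambda>i\<in>S. teval (A i) t (\<lambda>j. rs j i))"
    using S r by (intro restrict_ext) (auto intro!: teval_cong[OF t])
  show ?thesis
    unfolding proj_def by (rule image_eqI[where f = "\<lambda>r. restrict r S", OF eq[symmetric] mem])
qed

lemma merge_restrict: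
  assumes "I \<subseteq> N" "y \<in> extensional N"
  shows "merge I (restrict y I) (restrict y (N - I)) = y"
  using assms unfolding merge_def extensional_def by fastforce

lemma map2_merge_restrict:
  assumes "list_all2 (\<lambda>x y. restrict y I = x) xs ys" "I \<subseteq> N" "set ys \<subseteq> extensional N"
  shows "map2 (merge I) xs (map (\<lambda>y. restrict y (N - I)) ys) = ys"
  using assms(1,3)
proof (induction rule: list_all2_induct)
  case (Cons x xs y ys)
  have "merge I x (restrict y (N - I)) = y"
    unfolding Cons.hyps(1)[symmetric] by (rule merge_restrict[OF assms(2)]) (use Cons.prems in simp)
  with Cons.IH Cons.prems show ?case by (simp del: restrict_apply)
qed simp

lemma is_path_snoc:
  "is_path ar mul A J T (xs @ [x]) \<longleftrightarrow> is_path ar mul A J T xs \<and> x \<in> T \<and>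
     (xs \<noteq> [] \<longrightarrow> tup_sl_edge ar mul A J (last xs) x \<or> tup_aff_edge ar A J (last xs) x)"
  using consecutive_snoc[where P = "\<lambda>u v. tup_sl_edge ar mul A J u v \<or> tup_aff_edge ar A J u v"]
  unfolding is_path_def by auto

lemma tup_sl_edge_restrict [simp]:
  "tup_sl_edge ar mul A J (restrict x J) (restrict y J) \<longleftrightarrow> tup_sl_edge ar mul A J x y"
  unfolding tup_sl_edge_def by simp

lemma tup_aff_edge_restrict [simp]:
  "tup_aff_edge ar A J (restrict x J) (restrict y J) \<longleftrightarrow> tup_aff_edge ar A J x y"
  unfolding tup_aff_edge_def by simp

locale good_class_ops =
  fixes ar :: "'f \<Rightarrow> nat" and K :: "('a,'f) alg set" and mul p g h :: "'f trm"
  assumes good: "good_class ar K mul p g h"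
begin

lemma conservative: "A \<in> K \<Longrightarrow> conservative ar A"
  using good unfolding good_class_def by auto

lemma wf_mul: "wf_trm ar 2 mul" and wf_h: "wf_trm ar 3 h"
  using good unfolding good_class_def by auto

lemma mul_idem: "A \<in> K \<Longrightarrow> x \<in> univ A \<Longrightarrow> ev2 A mul x x = x"
  by (rule ev2_idem[OF conservative wf_mul])

lemma h_idem: "A \<in> K \<Longrightarrow> x \<in> univ A \<Longrightarrow> ev3 A h x x x = x"
  by (rule ev3_idem[OF conservative wf_h])

lemma mul_in_pair: "A \<in> K \<Longrightarrow> x \<in> univ A \<Longrightarrow> y \<in> univ A \<Longrightarrow> ev2 A mul x y \<in> {x, y}"
  by (rule ev2_in_pair[OF conservative wf_mul])

lemma good_class_pair:
  assumes "A \<in> K" "x \<in> univ A" "y \<in> univ A" "x \<noteq> y"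
  shows "(semilattice_edge ar A x y \<longrightarrow>
           semilat_on A mul x y \<and>
           (\<forall>u\<in>{x,y}. \<forall>v\<in>{x,y}. \<forall>w\<in>{x,y}.
              ev3 A g u v w = ev2 A mul (ev2 A mul u v) w \<and>
              ev3 A h u v w = ev2 A mul (ev2 A mul u v) w) \<and>
           (\<forall>u\<in>{x,y}. \<forall>v\<in>{x,y}. ev2 A p u v = ev2 A mul u v)) \<and>
        (\<not> semilattice_edge ar A x y \<longrightarrow> (\<forall>u\<in>{x,y}. \<forall>v\<in>{x,y}. ev2 A mul u v = u)) \<and>
        (majority_edge ar A x y \<longrightarrow>
           majority_on A g x y \<and>
           (\<forall>u\<in>{x,y}. \<forall>v\<in>{x,y}. \<forall>w\<in>{x,y}. ev3 A h u v w = u) \<and>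
           (\<forall>u\<in>{x,y}. \<forall>v\<in>{x,y}. ev2 A p u v = v)) \<and>
        (affine_edge ar A x y \<longrightarrow>
           affine_on A h x y \<and>
           (\<forall>u\<in>{x,y}. \<forall>v\<in>{x,y}. \<forall>w\<in>{x,y}. ev3 A g u v w = u) \<and>
           (\<forall>u\<in>{x,y}. \<forall>v\<in>{x,y}. ev2 A p u v = u))"
  using good[unfolded good_class_def, THEN conjunct2, THEN conjunct2, THEN conjunct2,
      THEN conjunct2, THEN conjunct2, THEN conjunct2, THEN conjunct2, THEN conjunct2,
      rule_format, OF assms] .

lemma semilat_on_mul: "A \<in> K \<Longrightarrow> semilattice_edge ar A x y \<Longrightarrow> semilat_on A mul x y"
  using good_class_pair unfolding semilattice_edge_def by blast

lemma h_on_semilattice_edge: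
  "A \<in> K \<Longrightarrow> semilattice_edge ar A x y \<Longrightarrow> ev3 A h x x y = ev2 A mul (ev2 A mul x x) y"
  using good_class_pair unfolding semilattice_edge_def by blast

lemma mul_off_semilattice_edge:
  "A \<in> K \<Longrightarrow> x \<in> univ A \<Longrightarrow> y \<in> univ A \<Longrightarrow> x \<noteq> y \<Longrightarrow> \<not> semilattice_edge ar A x y
    \<Longrightarrow> ev2 A mul x y = x"
  using good_class_pair by blast

lemma h_on_majority_edge: "A \<in> K \<Longrightarrow> majority_edge ar A x y \<Longrightarrow> ev3 A h x x y = x"
  using good_class_pair unfolding majority_edge_def by blast

lemma h_on_affine_edge: "A \<in> K \<Longrightarrow> affine_edge ar A x y \<Longrightarrow> ev3 A h x x y = y"
  using good_class_pair unfolding affine_edge_def affine_on_def by blast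

lemma mul_sl_step:
  assumes A: "A \<in> K" and xy: "x \<in> univ A" "y \<in> univ A"
  shows "x = ev2 A mul x y \<or> sl_dir ar mul A x (ev2 A mul x y)"
    and "ev2 A mul (ev2 A mul x y) y = ev2 A mul x y"
proof -
  have "ev2 A mul x y = x \<or> sl_dir ar mul A x y \<and> ev2 A mul x y = y"
  proof (cases "ev2 A mul x y = x")
    case nx: False
    then have xy_y: "ev2 A mul x y = y" using mul_in_pair[OF A xy] by blast
    have "x \<noteq> y" using nx mul_idem[OF A xy(1)] by auto
    then have "semilattice_edge ar A x y" using nx mul_off_semilattice_edge[OF A xy] by blast
    moreover from this have "ev2 A mul y x = y"
      using semilat_on_mul[OF A] xy_y unfolding semilat_on_def by metis
    ultimately show ?thesis using xy_y unfolding sl_dir_def by blast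
  qed simp
  then show "x = ev2 A mul x y \<or> sl_dir ar mul A x (ev2 A mul x y)"
    and "ev2 A mul (ev2 A mul x y) y = ev2 A mul x y"
    using mul_idem[OF A xy(2)] by auto
qed

lemma h_affine_step:
  assumes A: "A \<in> K" and xy: "x \<in> univ A" "y \<in> univ A" and absorb: "ev2 A mul x y = x"
  shows "x = ev3 A h x x y \<or> affine_edge ar A x (ev3 A h x x y)"
    and "ev2 A mul (ev3 A h x x y) y = ev3 A h x x y"
proof -
  have "ev3 A h x x y = x \<or> affine_edge ar A x y \<and> ev3 A h x x y = y"
  proof (cases "x = y")
    case True
    then show ?thesis using h_idem[OF A xy(1)] by simp
  next
    case False
    show ?thesis
    proof (cases "semilattice_edge ar A x y \<or> majority_edge ar A x y")
      case True
      then show ?thesis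
        using h_on_semilattice_edge[OF A] h_on_majority_edge[OF A] mul_idem[OF A xy(1)] absorb
        by auto
    next
      case False
      then have "affine_edge ar A x y" using xy \<open>x \<noteq> y\<close> unfolding affine_edge_def by blast
      then show ?thesis using h_on_affine_edge[OF A] by blast
    qed
  qed
  then show "x = ev3 A h x x y \<or> affine_edge ar A x (ev3 A h x x y)"
    and "ev2 A mul (ev3 A h x x y) y = ev3 A h x x y"
    using absorb mul_idem[OF A xy(2)] by auto
qed

lemma mul_along_sl_edge:
  assumes "A \<in> K" "x \<in> univ A" "x = y \<or> sl_dir ar mul A x y"
  shows "ev2 A mul x y = y"
  using assms(3) mul_idem[OF assms(1,2)] unfolding sl_dir_def by blast

lemma mul_along_affine_edge:
  assumes "A \<in> K" "x \<in> univ A" "x = y \<or> affine_edge ar A x y"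
  shows "ev2 A mul x y = x"
  using assms(3) mul_idem[OF assms(1,2)] mul_off_semilattice_edge[OF assms(1,2)]
  unfolding affine_edge_def by blast

lemma h_along_affine_edge:
  assumes "A \<in> K" "x \<in> univ A" "x = y \<or> affine_edge ar A x y"
  shows "ev3 A h x x y = y"
  using assms(3) h_idem[OF assms(1,2)] h_on_affine_edge[OF assms(1)] by blast

end

locale good_subpower = good_class_ops +
  fixes n :: nat and A :: "nat \<Rightarrow> ('a,'f) alg" and R :: "(nat \<Rightarrow> 'a) set"
  assumes A_in_K: "i \<in> {1..n} \<Longrightarrow> A i \<in> K" and subpower: "subpower ar n A R"
begin

lemma proj_closed_mul:
  assumes S: "S \<subseteq> {1..n}" and "c \<in> proj S R" "b \<in> proj S R"
  shows "(\<lambda>i\<in>S. ev2 (A i) mul (c i) (b i)) \<in> proj S R"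
proof -
  have closed: "(\<lambda>i\<in>S. teval (A i) mul (\<lambda>j. (if j = 0 then c else b) i)) \<in> proj S R"
    by (rule proj_closed[OF subpower S wf_mul]) (use assms in auto)
  have eq: "(\<lambda>i\<in>S. teval (A i) mul (\<lambda>j. (if j = 0 then c else b) i))
      = (\<lambda>i\<in>S. ev2 (A i) mul (c i) (b i))"
    unfolding ev2_def by (intro restrict_ext arg_cong[where f = "teval _ _"]) auto
  show ?thesis using closed unfolding eq .
qed

lemma proj_closed_h:
  assumes S: "S \<subseteq> {1..n}" and "c \<in> proj S R" "b \<in> proj S R"
  shows "(\<lambda>i\<in>S. ev3 (A i) h (c i) (c i) (b i)) \<in> proj S R"
proof -
  have closed: "(\<lambda>i\<in>S. teval (A i) h (\<lambda>j. (if j = 0 then c else if j = 1 then c else b) i))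
      \<in> proj S R"
    by (rule proj_closed[OF subpower S wf_h]) (use assms in auto)
  have eq: "(\<lambda>i\<in>S. teval (A i) h (\<lambda>j. (if j = 0 then c else if j = 1 then c else b) i))
      = (\<lambda>i\<in>S. ev3 (A i) h (c i) (c i) (b i))"
    unfolding ev3_def by (intro restrict_ext arg_cong[where f = "teval _ _"]) auto
  show ?thesis using closed unfolding eq .
qed

lemma mul_lifts_sl_edge:
  assumes JS: "J \<subseteq> S" "S \<subseteq> {1..n}" and c: "c \<in> proj S R" and b: "b \<in> proj S R"
    and edge: "tup_sl_edge ar mul A J c b"
  defines "c' \<equiv> \<lambda>i\<in>S. ev2 (A i) mul (c i) (b i)"
  shows "c' \<in> proj S R" and "restrict c' J = restrict b J"
    and "tup_sl_edge ar mul A S c c'" and "\<forall>i\<in>S. ev2 (A i) mul (c' i) (b i) = c' i"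
proof -
  have AK: "A i \<in> K" and cb: "c i \<in> univ (A i)" "b i \<in> univ (A i)" if "i \<in> S" for i
    using A_in_K[OF subsetD[OF JS(2) that]] proj_mem[OF subpower JS(2) c that]
      proj_mem[OF subpower JS(2) b that] .
  show "c' \<in> proj S R" unfolding c'_def by (rule proj_closed_mul[OF JS(2) c b])
  show "restrict c' J = restrict b J"
    using JS edge mul_along_sl_edge[OF AK cb(1)] unfolding c'_def tup_sl_edge_def
    by (intro restrict_ext) auto
  show "tup_sl_edge ar mul A S c c'"
    using mul_sl_step(1)[OF AK cb] unfolding c'_def tup_sl_edge_def by simp
  show "\<forall>i\<in>S. ev2 (A i) mul (c' i) (b i) = c' i"
    using mul_sl_step(2)[OF AK cb] unfolding c'_def by simp
qed

lemma mul_keeps_affine_source: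
  assumes JS: "J \<subseteq> S" "S \<subseteq> {1..n}" and c: "c \<in> proj S R" and b: "b \<in> proj S R"
    and edge: "tup_aff_edge ar A J c b"
  defines "c' \<equiv> \<lambda>i\<in>S. ev2 (A i) mul (c i) (b i)"
  shows "restrict c' J = restrict c J"
    and "\<forall>i\<in>S. ev2 (A i) mul (c i) (b i) \<noteq> c i \<longrightarrow> c' i = b i"
proof -
  have AK: "A i \<in> K" and cb: "c i \<in> univ (A i)" "b i \<in> univ (A i)" if "i \<in> S" for i
    using A_in_K[OF subsetD[OF JS(2) that]] proj_mem[OF subpower JS(2) c that]
      proj_mem[OF subpower JS(2) b that] .
  show "restrict c' J = restrict c J"
    using JS edge mul_along_affine_edge[OF AK cb(1)] unfolding c'_def tup_aff_edge_def
    by (intro restrict_ext) auto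
  show "\<forall>i\<in>S. ev2 (A i) mul (c i) (b i) \<noteq> c i \<longrightarrow> c' i = b i"
    using mul_in_pair[OF AK cb] unfolding c'_def by auto
qed

lemma h_lifts_affine_edge:
  assumes JS: "J \<subseteq> S" "S \<subseteq> {1..n}" and c: "c \<in> proj S R" and b: "b \<in> proj S R"
    and edge: "tup_aff_edge ar A J c b"
    and absorb: "\<forall>i\<in>S - J. ev2 (A i) mul (c i) (b i) = c i"
  defines "c' \<equiv> \<lambda>i\<in>S. ev3 (A i) h (c i) (c i) (b i)"
  shows "c' \<in> proj S R" and "restrict c' J = restrict b J"
    and "tup_aff_edge ar A S c c'" and "\<forall>i\<in>S. ev2 (A i) mul (c' i) (b i) = c' i"
proof -
  have AK: "A i \<in> K" and cb: "c i \<in> univ (A i)" "b i \<in> univ (A i)" if "i \<in> S" for i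
    using A_in_K[OF subsetD[OF JS(2) that]] proj_mem[OF subpower JS(2) c that]
      proj_mem[OF subpower JS(2) b that] .
  have on_J: "c' i = b i" if i: "i \<in> J" for i
  proof -
    have "c i = b i \<or> affine_edge ar (A i) (c i) (b i)"
      using edge i unfolding tup_aff_edge_def by blast
    with JS(1) i show ?thesis unfolding c'_def using h_along_affine_edge[OF AK cb(1)] by auto
  qed
  have off_J: "(c i = c' i \<or> affine_edge ar (A i) (c i) (c' i)) \<and>
      ev2 (A i) mul (c' i) (b i) = c' i" if i: "i \<in> S - J" for i
    using h_affine_step[OF AK cb absorb[rule_format, OF i]] i unfolding c'_def by simp
  show "c' \<in> proj S R" unfolding c'_def by (rule proj_closed_h[OF JS(2) c b])
  show "restrict c' J = restrict b J" using on_J by (intro restrict_ext) simp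
  show "tup_aff_edge ar A S c c'"
    unfolding tup_aff_edge_def
  proof
    fix i assume "i \<in> S"
    show "c i = c' i \<or> affine_edge ar (A i) (c i) (c' i)"
      using edge on_J off_J \<open>i \<in> S\<close> unfolding tup_aff_edge_def by (cases "i \<in> J") auto
  qed
  show "\<forall>i\<in>S. ev2 (A i) mul (c' i) (b i) = c' i"
  proof
    fix i assume "i \<in> S"
    show "ev2 (A i) mul (c' i) (b i) = c' i"
      using on_J off_J mul_idem[OF AK cb(2)] \<open>i \<in> S\<close> by (cases "i \<in> J") auto
  qed
qed

definition lifted_path :: "nat set \<Rightarrow> nat set \<Rightarrow> (nat \<Rightarrow> 'a) list \<Rightarrow> (nat \<Rightarrow> 'a) list \<Rightarrow> bool"
  where "lifted_path J S xs ys \<longleftrightarrow>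
    list_all2 (\<lambda>x y. restrict y J = x) xs ys \<and> is_path ar mul A S (proj S R) ys"

lemma lifted_path_last:
  assumes "lifted_path J S xs ys" "xs \<noteq> []"
  shows "last ys \<in> proj S R" and "restrict (last ys) J = last xs"
proof -
  have "ys \<noteq> []" using assms list_all2_lengthD unfolding lifted_path_def by fastforce
  then show "last ys \<in> proj S R" using assms(1) unfolding lifted_path_def is_path_def by auto
  show "restrict (last ys) J = last xs"
    using list_all2_last[of "\<lambda>x y. restrict y J = x"] assms unfolding lifted_path_def by blast
qed

lemma lifted_path_snoc:
  assumes ys: "lifted_path J S xs ys" and "xs \<noteq> []" and c: "c \<in> proj S R"
    and edge: "tup_sl_edge ar mul A S (last ys) c \<or> tup_aff_edge ar A S (last ys) c"
  shows "lifted_path J S (xs @ [restrict c J]) (ys @ [c])"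
proof -
  have "ys \<noteq> []" using assms list_all2_lengthD unfolding lifted_path_def by fastforce
  with assms show ?thesis unfolding lifted_path_def by (simp add: list_all2_appendI is_path_snoc)
qed

definition absorbing_lift :: "nat set \<Rightarrow> nat \<Rightarrow> (nat \<Rightarrow> 'a) list \<Rightarrow> (nat \<Rightarrow> 'a) \<Rightarrow> bool"
  where "absorbing_lift J m xs b \<longleftrightarrow>
    (\<exists>ys. lifted_path J (insert m J) xs ys \<and> ev2 (A m) mul (last ys m) (b m) = last ys m)"

lemma absorbing_lift_sl_snoc:
  assumes J: "J \<subseteq> {1..n}" "m \<in> {1..n}" and ys: "lifted_path J (insert m J) xs ys" "xs \<noteq> []"
    and b: "b \<in> proj (insert m J) R" and edge: "tup_sl_edge ar mul A J (last xs) (restrict b J)"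
  shows "absorbing_lift J m (xs @ [restrict b J]) b"
proof -
  have JS: "J \<subseteq> insert m J" "insert m J \<subseteq> {1..n}" using J by auto
  note c = lifted_path_last[OF ys]
  have "tup_sl_edge ar mul A J (last ys) b"
    using edge unfolding c(2)[symmetric] by simp
  note L = mul_lifts_sl_edge[OF JS c(1) b this]
  show ?thesis
    unfolding absorbing_lift_def
    using lifted_path_snoc[OF ys L(1) disjI1[OF L(3)]] L(2,4) by auto
qed

lemma absorbing_lift_affine_snoc:
  assumes J: "J \<subseteq> {1..n}" "m \<in> {1..n}" and "xs \<noteq> []" and lift: "absorbing_lift J m xs b"
    and b: "b \<in> proj (insert m J) R" and edge: "tup_aff_edge ar A J (last xs) (restrict b J)"
  shows "absorbing_lift J m (xs @ [restrict b J]) b"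
proof -
  have JS: "J \<subseteq> insert m J" "insert m J \<subseteq> {1..n}" using J by auto
  obtain ys where ys: "lifted_path J (insert m J) xs ys"
    and absorb: "ev2 (A m) mul (last ys m) (b m) = last ys m"
    using lift unfolding absorbing_lift_def by blast
  note c = lifted_path_last[OF ys \<open>xs \<noteq> []\<close>]
  have edge_ys: "tup_aff_edge ar A J (last ys) b"
    using edge unfolding c(2)[symmetric] by simp
  have absorb_ys: "\<forall>i\<in>insert m J - J. ev2 (A i) mul (last ys i) (b i) = last ys i"
    using absorb by auto
  note L = h_lifts_affine_edge[OF JS c(1) b edge_ys absorb_ys]
  show ?thesis
    unfolding absorbing_lift_def
    using lifted_path_snoc[OF ys \<open>xs \<noteq> []\<close> L(1) disjI2[OF L(3)]] L(2,4) by auto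
qed

lemma absorbing_lift_relift:
  assumes J: "J \<subseteq> {1..n}" "m \<in> {1..n}" and ys: "lifted_path J (insert m J) xs ys" "xs \<noteq> []"
    and b: "b \<in> proj (insert m J) R" and edge: "tup_aff_edge ar A J (last xs) (restrict b J)"
    and lift: "\<And>c. c \<in> proj (insert m J) R \<Longrightarrow> restrict c J = last xs \<Longrightarrow> absorbing_lift J m xs c"
  shows "absorbing_lift J m xs b"
proof (cases "ev2 (A m) mul (last ys m) (b m) = last ys m")
  case True
  then show ?thesis using ys unfolding absorbing_lift_def by blast
next
  case False
  have JS: "J \<subseteq> insert m J" "insert m J \<subseteq> {1..n}" using J by auto
  define b' where "b' = (\<lambda>i\<in>insert m J. ev2 (A i) mul (last ys i) (b i))"
  note c = lifted_path_last[OF ys]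
  have "tup_aff_edge ar A J (last ys) b" using edge unfolding c(2)[symmetric] by simp
  note M = mul_keeps_affine_source[OF JS c(1) b this, folded b'_def]
  have "absorbing_lift J m xs b'"
    using lift proj_closed_mul[OF JS(2) c(1) b, folded b'_def] M(1) c(2) by simp
  moreover have "b' m = b m" using M(2) False by simp
  ultimately show ?thesis unfolding absorbing_lift_def by simp
qed

lemma absorbing_lift_exists:
  assumes J: "J \<subseteq> {1..n}" "m \<in> {1..n}"
  shows "is_path ar mul A J (proj J R) xs \<Longrightarrow> xs \<noteq> [] \<Longrightarrow> b \<in> proj (insert m J) R
    \<Longrightarrow> restrict b J = last xs \<Longrightarrow> absorbing_lift J m xs b"
proof (induction xs arbitrary: b rule: rev_induct)
  case (snoc x' xs)
  have JS: "J \<subseteq> insert m J" "insert m J \<subseteq> {1..n}" using J by auto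
  have b: "b \<in> proj (insert m J) R" and x': "x' = restrict b J" using snoc.prems by auto
  show ?case
  proof (cases "xs = []")
    case True
    have "ev2 (A m) mul (b m) (b m) = b m"
      using mul_idem[OF A_in_K[OF J(2)] proj_mem[OF subpower JS(2) b]] by simp
    then show ?thesis
      using True b unfolding x' absorbing_lift_def lifted_path_def is_path_def
      by (intro exI[of _ "[b]"]) auto
  next
    case False
    have path: "is_path ar mul A J (proj J R) xs"
      and edge: "tup_sl_edge ar mul A J (last xs) x' \<or> tup_aff_edge ar A J (last xs) x'"
      using snoc.prems(1) False by (simp_all add: is_path_snoc)
    have IH: "absorbing_lift J m xs c" if "c \<in> proj (insert m J) R" "restrict c J = last xs" for c
      using snoc.IH[OF path False that] .
    have "last xs \<in> proj J R" using path False unfolding is_path_def by auto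
    then obtain c0 where "c0 \<in> proj (insert m J) R" "restrict c0 J = last xs"
      using proj_fibre[OF JS(1)] by blast
    then obtain ys0 where ys0: "lifted_path J (insert m J) xs ys0"
      using IH unfolding absorbing_lift_def by blast
    from edge show ?thesis
    proof
      assume "tup_sl_edge ar mul A J (last xs) x'"
      then show ?thesis using absorbing_lift_sl_snoc[OF J ys0 False b] unfolding x' by blast
    next
      assume aff: "tup_aff_edge ar A J (last xs) x'"
      have "absorbing_lift J m xs b"
        using absorbing_lift_relift[OF J ys0 False b _ IH] aff unfolding x' by blast
      then show ?thesis using absorbing_lift_affine_snoc[OF J False _ b] aff unfolding x' by blast
    qed
  qed
qed simp

lemma lifted_path_insert:
  assumes J: "J \<subseteq> {1..n}" "m \<in> {1..n}" and path: "is_path ar mul A J (proj J R) xs"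
  shows "\<exists>ys. lifted_path J (insert m J) xs ys"
proof (cases "xs = []")
  case True
  then show ?thesis unfolding lifted_path_def is_path_def by auto
next
  case False
  then have "last xs \<in> proj J R" using path unfolding is_path_def by auto
  then obtain b where "b \<in> proj (insert m J) R" "restrict b J = last xs"
    using proj_fibre[of J "insert m J"] by blast
  then show ?thesis
    using absorbing_lift_exists[OF J path False] unfolding absorbing_lift_def by blast
qed

lemma lifted_path_union:
  assumes "finite D" "I \<union> D \<subseteq> {1..n}" and path: "is_path ar mul A I (proj I R) xs"
  shows "\<exists>ys. lifted_path I (I \<union> D) xs ys"
  using assms(1,2)
proof (induction D rule: finite_induct)
  case empty
  have "list_all2 (\<lambda>x y. restrict y I = x) xs xs"
    using path proj_restrict unfolding is_path_def by (auto simp: list_all2_same)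
  then show ?case using path unfolding lifted_path_def by auto
next
  case (insert m D)
  then obtain ys where ys: "lifted_path I (I \<union> D) xs ys" by blast
  obtain zs where zs: "lifted_path (I \<union> D) (insert m (I \<union> D)) ys zs"
    using lifted_path_insert[of "I \<union> D" m ys] insert.prems ys unfolding lifted_path_def by blast
  have "list_all2 (\<lambda>x z. restrict z I = x) xs zs"
    using ys zs unfolding lifted_path_def list_all2_conv_all_nth
  proof (elim conjE, intro conjI allI impI)
    fix i assume "\<forall>i<length xs. restrict (ys ! i) I = xs ! i"
      and "\<forall>i<length ys. restrict (zs ! i) (I \<union> D) = ys ! i"
      and "length xs = length ys" "i < length xs"
    then have "restrict (restrict (zs ! i) (I \<union> D)) I = xs ! i" by simp
    then show "restrict (zs ! i) I = xs ! i" by (simp add: Int_absorb1)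
  qed simp
  then show ?case using zs unfolding lifted_path_def by auto
qed

lemma lifted_path_full:
  assumes "I \<subseteq> {1..n}" "is_path ar mul A I (proj I R) xs"
  shows "\<exists>ys. list_all2 (\<lambda>x y. restrict y I = x) xs ys \<and> is_path ar mul A {1..n} R ys"
proof -
  have "I \<union> ({1..n} - I) = {1..n}" using assms(1) by blast
  then show ?thesis
    using lifted_path_union[of "{1..n} - I" I xs] assms proj_full[OF subpower]
    unfolding lifted_path_def by simp
qed

end

theorem lemma2p3:
  fixes ar :: "'f \<Rightarrow> nat" and K :: "('a,'f) alg set"
    and mul p g h :: "'f trm"
    and n :: nat and A :: "nat \<Rightarrow> ('a,'f) alg" and R :: "(nat \<Rightarrow> 'a) set"
    and I :: "nat set" and as :: "(nat \<Rightarrow> 'a) list"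
  assumes "good_class ar K mul p g h"
    and "\<forall>i\<in>{1..n}. A i \<in> K"
    and "subpower ar n A R"
    and "I \<subseteq> {1..n}"
    and "is_path ar mul A I (proj I R) as"
  shows "\<exists>bs. length bs = length as \<and>
           (\<forall>j<length as. bs ! j \<in> proj ({1..n} - I) R \<and> merge I (as ! j) (bs ! j) \<in> R) \<and>
           is_path ar mul A {1..n} R (map2 (merge I) as bs)"
proof -
  interpret good_subpower ar K mul p g h n A R
    using assms(1-3) by unfold_locales auto
  obtain ys where lift: "list_all2 (\<lambda>a y. restrict y I = a) as ys"
    and path: "is_path ar mul A {1..n} R ys"
    using lifted_path_full[OF assms(4,5)] by blast
  define bs where "bs = map (\<lambda>y. restrict y ({1..n} - I)) ys"
  have ys_R: "set ys \<subseteq> R" using path unfolding is_path_def by simp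
  then have "set ys \<subseteq> extensional {1..n}" using subpower_PiE[OF assms(3)] by (auto simp: PiE_def)
  then have merged: "map2 (merge I) as bs = ys"
    unfolding bs_def by (rule map2_merge_restrict[OF lift assms(4)])
  have len: "length bs = length as" "length ys = length as"
    using list_all2_lengthD[OF lift] by (simp_all add: bs_def)
  show ?thesis
  proof (intro exI[of _ bs] conjI allI impI)
    fix j assume j: "j < length as"
    then have yj: "ys ! j \<in> R" using ys_R len(2) nth_mem[of j ys] by auto
    then show "bs ! j \<in> proj ({1..n} - I) R" using j len(2) unfolding bs_def proj_def by simp
    have "merge I (as ! j) (bs ! j) = ys ! j"
      using arg_cong[OF merged, of "\<lambda>zs. zs ! j"] j len by simp
    with yj show "merge I (as ! j) (bs ! j) \<in> R" by simp
  qed (use len path merged in simp_all)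
qed

end
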